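(* (i) Every graph with $n$ vertices has at most $\sqrt{n+1}\cdot 2^{n/2}$ cliques or at most $\sqrt{n+1}\cdot 2^{n/2}$ cocliques. (ii) For every $n\ge 0$ there is a graph with $n$ vertices that has at least $\frac12\sqrt{n+1}\cdot 2^{n/2}$ cliques and at least $\frac12\sqrt{n+1}\cdot 2^{n/2}$ cocliques.
   Context: A graph is a finite simple undirected graph $(V,E)$. A clique is a set $X\subseteq V$ with every two distinct vertices adjacent; a coclique is a set $Y\subseteq V$ with no two distinct vertices adjacent (the empty set and singletons count as both). *)

theory Defs
  imports Complex_Main
begin

definition simple_graph :: "'a set \<Rightarrow> ('a \<Rightarrow> 'a \<Rightarrow> bool) \<Rightarrow> bool" where
  "simple_graph V E \<longleftrightarrow> finite V \<and> (\<forall>x y. E x y \<longrightarrow> E y x)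
     \<and> (\<forall>x. \<not> E x x) \<and> (\<forall>x y. E x y \<longrightarrow> x \<in> V \<and> y \<in> V)"

definition is_clique :: "'a set \<Rightarrow> ('a \<Rightarrow> 'a \<Rightarrow> bool) \<Rightarrow> 'a set \<Rightarrow> bool" where
  "is_clique V E X \<longleftrightarrow> X \<subseteq> V \<and> (\<forall>x\<in>X. \<forall>y\<in>X. x \<noteq> y \<longrightarrow> E x y)"

definition is_coclique :: "'a set \<Rightarrow> ('a \<Rightarrow> 'a \<Rightarrow> bool) \<Rightarrow> 'a set \<Rightarrow> bool" where
  "is_coclique V E Y \<longleftrightarrow> Y \<subseteq> V \<and> (\<forall>x\<in>Y. \<forall>y\<in>Y. x \<noteq> y \<longrightarrow> \<not> E x y)"

definition num_cliques :: "'a set \<Rightarrow> ('a \<Rightarrow> 'a \<Rightarrow> bool) \<Rightarrow> nat" where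
  "num_cliques V E = card {X. is_clique V E X}"

definition num_cocliques :: "'a set \<Rightarrow> ('a \<Rightarrow> 'a \<Rightarrow> bool) \<Rightarrow> nat" where
  "num_cocliques V E = card {Y. is_coclique V E Y}"

end

theory Submission
  imports Defs
begin

(* A clique X and a coclique Y meet in at most one vertex v.  If they meet, the pair is determined
  by (X \<union> Y, v): X consists of v and its neighbours in X \<union> Y, Y of v and its non-neighbours.
  If they are disjoint, X is a split of S = X \<union> Y into a clique and a coclique, and S has at most
  |S| + 1 such splits.  Summing over S \<subseteq> V bounds the number of pairs by
  2 \<Sigma>|S| + 2^n = (n + 1) 2^n, so one of the two counts is at most its square root.
  Conversely, a clique on a vertices plus n - a isolated vertices has at least 2^a cliques and
  (a + 1) 2^(n - a) cocliques, and both exceed half that square root for the least a with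
  4^(a + 1) \<ge> (n + 1) 2^n. *)

lemma finite_cliques: "finite V \<Longrightarrow> finite {X. is_clique V E X}"
  by (rule finite_subset[of _ "Pow V"]) (auto simp: is_clique_def)

lemma finite_cocliques: "finite V \<Longrightarrow> finite {Y. is_coclique V E Y}"
  by (rule finite_subset[of _ "Pow V"]) (auto simp: is_coclique_def)

lemma is_cliqueD: "is_clique V E X \<Longrightarrow> x \<in> X \<Longrightarrow> y \<in> X \<Longrightarrow> x \<noteq> y \<Longrightarrow> E x y"
  by (simp add: is_clique_def)

lemma is_cocliqueD: "is_coclique V E X \<Longrightarrow> x \<in> X \<Longrightarrow> y \<in> X \<Longrightarrow> x \<noteq> y \<Longrightarrow> \<not> E x y"
  by (simp add: is_coclique_def)

lemma is_clique_subset: "is_clique V E X \<Longrightarrow> Y \<subseteq> X \<Longrightarrow> is_clique V E Y"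
  unfolding is_clique_def by blast

lemma is_coclique_subset: "is_coclique V E X \<Longrightarrow> Y \<subseteq> X \<Longrightarrow> is_coclique V E Y"
  unfolding is_coclique_def by blast

definition clique_coclique_splits :: "'a set \<Rightarrow> ('a \<Rightarrow> 'a \<Rightarrow> bool) \<Rightarrow> 'a set \<Rightarrow> 'a set set" where
  "clique_coclique_splits V E S = {X. X \<subseteq> S \<and> is_clique V E X \<and> is_coclique V E (S - X)}"

lemma finite_clique_coclique_splits: "finite S \<Longrightarrow> finite (clique_coclique_splits V E S)"
  by (rule finite_subset[of _ "Pow S"]) (auto simp: clique_coclique_splits_def)

lemma clique_coclique_splits_remove:
  assumes "v \<notin> S" "X \<in> clique_coclique_splits V E (insert v S)"
  shows "X - {v} \<in> clique_coclique_splits V E S"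
proof -
  have "X \<subseteq> insert v S" "is_clique V E X" "is_coclique V E (insert v S - X)"
    using assms(2) by (simp_all add: clique_coclique_splits_def)
  moreover have "S - (X - {v}) \<subseteq> insert v S - X"
    using assms(1) by blast
  ultimately show ?thesis
    unfolding clique_coclique_splits_def by (blast intro: is_clique_subset is_coclique_subset)
qed

lemma clique_coclique_splits_insert_eq_neighbours:
  assumes "v \<notin> S" "v \<notin> X"
    and "X \<in> clique_coclique_splits V E (insert v S)"
    and "insert v X \<in> clique_coclique_splits V E (insert v S)"
  shows "X = {u \<in> S. E v u}"
proof
  have sub: "insert v X \<subseteq> insert v S" and clique: "is_clique V E (insert v X)"
    using assms(4) by (simp_all add: clique_coclique_splits_def)
  have coclique: "is_coclique V E (insert v S - X)"
    using assms(3) by (simp add: clique_coclique_splits_def)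
  show "X \<subseteq> {u \<in> S. E v u}"
  proof
    fix u assume "u \<in> X"
    with assms(2) sub have "u \<noteq> v" "u \<in> S"
      by blast+
    moreover have "E v u"
      using \<open>u \<in> X\<close> \<open>u \<noteq> v\<close> by (intro is_cliqueD[OF clique]) simp_all
    ultimately show "u \<in> {u \<in> S. E v u}"
      by simp
  qed
  show "{u \<in> S. E v u} \<subseteq> X"
  proof
    fix u assume u: "u \<in> {u \<in> S. E v u}"
    show "u \<in> X"
    proof (rule ccontr)
      assume "u \<notin> X"
      with u assms(1,2) have "\<not> E v u"
        by (intro is_cocliqueD[OF coclique]) auto
      with u show False
        by simp
    qed
  qed
qed

lemma card_clique_coclique_splits_le:
  assumes "finite S"
  shows "card (clique_coclique_splits V E S) \<le> card S + 1"
  using assms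
proof (induction S rule: finite_induct)
  case empty
  have "clique_coclique_splits V E {} \<subseteq> {{}}"
    unfolding clique_coclique_splits_def by blast
  then show ?case
    using card_mono[of "{{}}"] by simp
next
  case (insert v S)
  \<comment> \<open>Removing v maps splits of insert v S to splits of S, injectively except on the pair
    N, insert v N, where N is the neighbourhood of v in S.\<close>
  define A where "A = clique_coclique_splits V E (insert v S)"
  define N where "N = {u \<in> S. E v u}"
  have restrict: "(\<lambda>X. X - {v}) ` A \<subseteq> clique_coclique_splits V E S"
    unfolding A_def using insert.hyps(2) by (blast intro: clique_coclique_splits_remove)
  have "inj_on (\<lambda>X. X - {v}) (A - {insert v N})"
  proof (rule inj_onI)
    have eq_if_v_in_first: "X = X'"
      if "X \<in> A - {insert v N}" "X' \<in> A" "X - {v} = X' - {v}" "v \<in> X" for X X'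
    proof (rule ccontr)
      assume "X \<noteq> X'"
      with that have "v \<notin> X'" "X = insert v X'"
        by blast+
      moreover have "X' \<in> A" "insert v X' \<in> A"
        using that(1,2) \<open>X = insert v X'\<close> by blast+
      ultimately have "X' = N"
        unfolding A_def N_def using insert.hyps(2)
        by (intro clique_coclique_splits_insert_eq_neighbours) simp_all
      with \<open>X = insert v X'\<close> that(1) show False
        by blast
    qed
    show "X = X'" if "X \<in> A - {insert v N}" "X' \<in> A - {insert v N}" "X - {v} = X' - {v}" for X X'
      using eq_if_v_in_first[of X X'] eq_if_v_in_first[of X' X] that by blast
  qed
  then have "card (A - {insert v N}) = card ((\<lambda>X. X - {v}) ` (A - {insert v N}))"
    by (simp add: card_image)
  also have "\<dots> \<le> card (clique_coclique_splits V E S)"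
    using restrict by (intro card_mono finite_clique_coclique_splits insert.hyps) blast
  also have "\<dots> \<le> card S + 1"
    by (rule insert.IH)
  finally have "card (A - {insert v N}) \<le> card S + 1" .
  moreover have "card A \<le> card (A - {insert v N}) + 1"
    by (simp add: card_Diff_singleton_if) arith
  ultimately show ?case
    using insert.hyps by (simp add: A_def)
qed

lemma sum_card_Pow:
  assumes "finite V"
  shows "2 * (\<Sum>S\<in>Pow V. card S) = card V * 2 ^ card V"
proof -
  have "(\<Sum>S\<in>Pow V. card S) = (\<Sum>S\<in>Pow V. card (V - S))"
    by (rule sum.reindex_bij_witness[of _ "\<lambda>S. V - S" "\<lambda>S. V - S"]) (auto simp: double_diff)
  then have "2 * (\<Sum>S\<in>Pow V. card S) = (\<Sum>S\<in>Pow V. card S + card (V - S))"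
    by (simp add: sum.distrib)
  also have "\<dots> = (\<Sum>S\<in>Pow V. card V)"
  proof (rule sum.cong)
    fix S assume "S \<in> Pow V"
    then show "card S + card (V - S) = card V"
      using assms by (simp add: card_Diff_subset card_mono finite_subset)
  qed simp
  also have "\<dots> = card V * 2 ^ card V"
    using assms by (simp add: card_Pow)
  finally show ?thesis .
qed

lemma card_disjoint_clique_coclique_pairs_le:
  assumes "finite V"
  shows "card {(X, Y). is_clique V E X \<and> is_coclique V E Y \<and> X \<inter> Y = {}}
    \<le> (\<Sum>S\<in>Pow V. card S + 1)"
proof -
  let ?splits = "SIGMA S:Pow V. clique_coclique_splits V E S"
  have fin: "finite ?splits"
    using assms by (intro finite_SigmaI finite_clique_coclique_splits) (auto intro: finite_subset)
  have "{(X, Y). is_clique V E X \<and> is_coclique V E Y \<and> X \<inter> Y = {}}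
      \<subseteq> (\<lambda>(S, X). (X, S - X)) ` ?splits"
  proof (rule subsetI, clarify)
    fix X Y assume XY: "is_clique V E X" "is_coclique V E Y" "X \<inter> Y = {}"
    then have mem: "(X \<union> Y, X) \<in> ?splits"
      by (auto simp: clique_coclique_splits_def is_clique_def is_coclique_def Un_Diff)
    have eq: "(X, Y) = (X, (X \<union> Y) - X)"
      using XY(3) by blast
    show "(X, Y) \<in> (\<lambda>(S, X). (X, S - X)) ` ?splits"
      by (rule rev_image_eqI[OF mem]) (simp only: eq prod.case)
  qed
  then have "card {(X, Y). is_clique V E X \<and> is_coclique V E Y \<and> X \<inter> Y = {}}
      \<le> card ((\<lambda>(S, X). (X, S - X)) ` ?splits)"
    by (rule card_mono[OF finite_imageI[OF fin]])
  also have "\<dots> \<le> card ?splits"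
    by (rule card_image_le[OF fin])
  also have "\<dots> = (\<Sum>S\<in>Pow V. card (clique_coclique_splits V E S))"
    using assms by (intro card_SigmaI) (auto intro: finite_clique_coclique_splits finite_subset)
  also have "\<dots> \<le> (\<Sum>S\<in>Pow V. card S + 1)"
    using assms by (intro sum_mono card_clique_coclique_splits_le) (auto intro: finite_subset)
  finally show ?thesis .
qed

lemma common_vertex_determines_clique_coclique:
  assumes "is_clique V E X" "is_coclique V E Y" "v \<in> X" "v \<in> Y"
  shows "X = {u \<in> X \<union> Y. u = v \<or> E v u}" "Y = {u \<in> X \<union> Y. u = v \<or> \<not> E v u}"
proof -
  have memb: "(u \<in> X \<longleftrightarrow> u \<in> X \<union> Y \<and> (u = v \<or> E v u))
    \<and> (u \<in> Y \<longleftrightarrow> u \<in> X \<union> Y \<and> (u = v \<or> \<not> E v u))" for u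
  proof (cases "u = v")
    case False
    then have "u \<in> X \<Longrightarrow> E v u" "u \<in> Y \<Longrightarrow> \<not> E v u"
      using is_cliqueD[OF assms(1,3)] is_cocliqueD[OF assms(2,4)] by simp_all
    with False show ?thesis
      by auto
  qed (use assms in simp)
  show "X = {u \<in> X \<union> Y. u = v \<or> E v u}" "Y = {u \<in> X \<union> Y. u = v \<or> \<not> E v u}"
    using memb by (simp_all add: set_eq_iff)
qed

lemma card_meeting_clique_coclique_pairs_le:
  assumes "finite V"
  shows "card {(X, Y). is_clique V E X \<and> is_coclique V E Y \<and> X \<inter> Y \<noteq> {}}
    \<le> (\<Sum>S\<in>Pow V. card S)"
proof -
  let ?pointed = "SIGMA S:Pow V. S"
  have fin: "finite ?pointed"
    using assms by (intro finite_SigmaI) (auto intro: finite_subset)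
  have "{(X, Y). is_clique V E X \<and> is_coclique V E Y \<and> X \<inter> Y \<noteq> {}}
      \<subseteq> (\<lambda>(S, v). ({u \<in> S. u = v \<or> E v u}, {u \<in> S. u = v \<or> \<not> E v u})) ` ?pointed"
  proof (rule subsetI, clarify)
    fix X Y assume XY: "is_clique V E X" "is_coclique V E Y" "X \<inter> Y \<noteq> {}"
    then obtain v where v: "v \<in> X" "v \<in> Y"
      by blast
    then have mem: "(X \<union> Y, v) \<in> ?pointed"
      using XY by (auto simp: is_clique_def is_coclique_def)
    have eq: "(X, Y) = ({u \<in> X \<union> Y. u = v \<or> E v u}, {u \<in> X \<union> Y. u = v \<or> \<not> E v u})"
      using common_vertex_determines_clique_coclique[OF XY(1,2) v] by simp
    show "(X, Y) \<in> (\<lambda>(S, v). ({u \<in> S. u = v \<or> E v u}, {u \<in> S. u = v \<or> \<not> E v u})) ` ?pointed"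
      by (rule rev_image_eqI[OF mem]) (simp only: eq prod.case)
  qed
  then have "card {(X, Y). is_clique V E X \<and> is_coclique V E Y \<and> X \<inter> Y \<noteq> {}}
      \<le> card ((\<lambda>(S, v). ({u \<in> S. u = v \<or> E v u}, {u \<in> S. u = v \<or> \<not> E v u})) ` ?pointed)"
    by (rule card_mono[OF finite_imageI[OF fin]])
  also have "\<dots> \<le> card ?pointed"
    by (rule card_image_le[OF fin])
  also have "\<dots> = (\<Sum>S\<in>Pow V. card S)"
    using assms by (intro card_SigmaI) (auto intro: finite_subset)
  finally show ?thesis .
qed

lemma num_cliques_mult_num_cocliques_le:
  assumes "finite V"
  shows "num_cliques V E * num_cocliques V E \<le> (card V + 1) * 2 ^ card V"
proof -
  have "num_cliques V E * num_cocliques V E = card ({X. is_clique V E X} \<times> {Y. is_coclique V E Y})"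
    by (simp add: num_cliques_def num_cocliques_def card_cartesian_product)
  also have "{X. is_clique V E X} \<times> {Y. is_coclique V E Y} =
      {(X, Y). is_clique V E X \<and> is_coclique V E Y \<and> X \<inter> Y = {}}
      \<union> {(X, Y). is_clique V E X \<and> is_coclique V E Y \<and> X \<inter> Y \<noteq> {}}"
    by blast
  also have "card \<dots> \<le> (\<Sum>S\<in>Pow V. card S + 1) + (\<Sum>S\<in>Pow V. card S)"
    using card_Un_le card_disjoint_clique_coclique_pairs_le[OF assms]
      card_meeting_clique_coclique_pairs_le[OF assms]
    by (meson add_mono order_trans)
  also have "\<dots> = 2 * (\<Sum>S\<in>Pow V. card S) + 2 ^ card V"
    using assms by (simp only: sum.distrib) (simp add: card_Pow)
  also have "\<dots> = (card V + 1) * 2 ^ card V"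
    using sum_card_Pow[OF assms] by simp
  finally show ?thesis .
qed

lemma sqrt_succ_mult_powr_half:
  "sqrt (real n + 1) * 2 powr (real n / 2) = sqrt (real ((n + 1) * 2 ^ n))"
proof -
  have "2 powr (real n / 2) = sqrt (2 ^ n)"
    by (simp add: powr_half_sqrt[symmetric] powr_powr powr_realpow[symmetric])
  then show ?thesis
    by (simp add: real_sqrt_mult[symmetric] algebra_simps)
qed

lemma le_sqrt_or_le_sqrt:
  fixes c d M :: real
  assumes "0 \<le> c" "0 \<le> d" "c * d \<le> M"
  shows "c \<le> sqrt M \<or> d \<le> sqrt M"
proof (rule ccontr)
  assume "\<not> ?thesis"
  then have "sqrt M < c" "sqrt M < d"
    by auto
  moreover have "0 \<le> M"
    using assms by (meson order_trans zero_le_mult_iff)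
  ultimately have "sqrt M * sqrt M < c * d"
    by (meson mult_strict_mono' real_sqrt_ge_zero)
  with \<open>0 \<le> M\<close> assms(3) show False
    by simp
qed

lemma few_cliques_or_few_cocliques:
  assumes "finite V"
  shows "real (num_cliques V E) \<le> sqrt (real (card V) + 1) * 2 powr (real (card V) / 2)
    \<or> real (num_cocliques V E) \<le> sqrt (real (card V) + 1) * 2 powr (real (card V) / 2)"
proof -
  have "real (num_cliques V E * num_cocliques V E) \<le> real ((card V + 1) * 2 ^ card V)"
    using num_cliques_mult_num_cocliques_le[OF assms] by (rule of_nat_mono)
  then show ?thesis
    unfolding sqrt_succ_mult_powr_half by (intro le_sqrt_or_le_sqrt) simp_all
qed

lemma half_sqrt_le_of_le_square:
  fixes N k :: nat
  assumes "N \<le> 4 * k ^ 2"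
  shows "sqrt (real N) / 2 \<le> real k"
proof -
  have "real N \<le> (2 * real k) ^ 2"
    using of_nat_mono[OF assms] by (simp add: power_mult_distrib)
  then have "sqrt (real N) \<le> 2 * real k"
    using real_le_lsqrt real_sqrt_le_iff by fastforce
  then show ?thesis
    by simp
qed

definition clique_edges :: "nat \<Rightarrow> nat \<Rightarrow> nat \<Rightarrow> bool" where
  "clique_edges a x y \<longleftrightarrow> x < a \<and> y < a \<and> x \<noteq> y"

lemma simple_graph_clique_edges: "a \<le> n \<Longrightarrow> simple_graph {..<n} (clique_edges a)"
  by (auto simp: simple_graph_def clique_edges_def)

lemma num_cliques_clique_edges_ge: "a \<le> n \<Longrightarrow> 2 ^ a \<le> num_cliques {..<n} (clique_edges a)"
proof -
  assume "a \<le> n"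
  then have "Pow {..<a} \<subseteq> {X. is_clique {..<n} (clique_edges a) X}"
    by (auto simp: is_clique_def clique_edges_def)
  then have "card (Pow {..<a}) \<le> num_cliques {..<n} (clique_edges a)"
    unfolding num_cliques_def by (intro card_mono finite_cliques) simp_all
  then show ?thesis
    by (simp add: card_Pow)
qed

lemma num_cocliques_clique_edges_ge:
  "a \<le> n \<Longrightarrow> (a + 1) * 2 ^ (n - a) \<le> num_cocliques {..<n} (clique_edges a)"
proof -
  assume "a \<le> n"
  \<comment> \<open>k = a encodes a coclique without vertices of the clique.\<close>
  let ?f = "\<lambda>(k, T). {k} \<inter> {..<a} \<union> T"
  have "inj_on ?f ({..a} \<times> Pow {a..<n})"
  proof (rule inj_onI, clarify)
    fix k T k' T'
    assume "k \<le> a" "T \<subseteq> {a..<n}" "k' \<le> a" "T' \<subseteq> {a..<n}"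
      and eq: "{k} \<inter> {..<a} \<union> T = {k'} \<inter> {..<a} \<union> T'"
    have "T = ({k} \<inter> {..<a} \<union> T) - {..<a}" "T' = ({k'} \<inter> {..<a} \<union> T') - {..<a}"
      using \<open>T \<subseteq> {a..<n}\<close> \<open>T' \<subseteq> {a..<n}\<close> by auto
    moreover have "{k} \<inter> {..<a} = {k'} \<inter> {..<a}"
      using eq \<open>T \<subseteq> {a..<n}\<close> \<open>T' \<subseteq> {a..<n}\<close> by auto
    then have "k = k'"
      using \<open>k \<le> a\<close> \<open>k' \<le> a\<close> by (cases "k < a"; cases "k' < a") auto
    ultimately show "k = k' \<and> T = T'"
      using eq by simp
  qed
  then have "card ({..a} \<times> Pow {a..<n}) = card (?f ` ({..a} \<times> Pow {a..<n}))"
    by (rule card_image[symmetric])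
  also have "\<dots> \<le> num_cocliques {..<n} (clique_edges a)"
    unfolding num_cocliques_def
    using \<open>a \<le> n\<close>
    by (intro card_mono finite_cocliques) (auto simp: is_coclique_def clique_edges_def subset_iff)
  finally show ?thesis
    by (simp add: card_cartesian_product card_Pow)
qed

lemma succ_mult_two_power_le: "(n + 1) * 2 ^ n \<le> 4 * (2 ^ n) ^ 2"
proof -
  have "n + 1 \<le> 4 * 2 ^ n"
    using less_exp[of n] by linarith
  then have "(n + 1) * 2 ^ n \<le> (4 * 2 ^ n) * 2 ^ n"
    by (rule mult_right_mono) simp
  then show ?thesis
    by (simp add: power2_eq_square mult.assoc)
qed

lemma exists_balanced_clique_size:
  fixes n :: nat
  obtains a where "a \<le> n" "(n + 1) * 2 ^ n \<le> 4 * (2 ^ a) ^ 2"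
    "(n + 1) * 2 ^ n \<le> 4 * ((a + 1) * 2 ^ (n - a)) ^ 2"
proof -
  define N where "N = (n + 1) * 2 ^ n"
  have N_le: "N \<le> 4 * (2 ^ n) ^ 2"
    unfolding N_def by (rule succ_mult_two_power_le)
  define a where "a = (LEAST a. N \<le> 4 * (2 ^ a) ^ 2)"
  have a_fits: "N \<le> 4 * (2 ^ a) ^ 2"
    unfolding a_def using N_le by (rule LeastI)
  have "a \<le> n"
    unfolding a_def using N_le by (rule Least_le)
  have "N \<le> 4 * ((a + 1) * 2 ^ (n - a)) ^ 2"
  proof (cases a)
    case 0
    with N_le show ?thesis
      by simp
  next
    case (Suc b)
    have "(2 ^ a) ^ 2 < N"
      using not_less_Least[of b "\<lambda>a. N \<le> 4 * (2 ^ a) ^ 2"] Suc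
      by (simp add: a_def power2_eq_square)
    have "n + 1 \<le> 2 * (a + 1)"
    proof (rule ccontr)
      assume "\<not> ?thesis"
      then have "(2::nat) ^ (2 * a + 2) \<le> 2 ^ n"
        by (intro power_increasing) simp_all
      moreover have "(2::nat) ^ (2 * a + 2) = 4 * (2 ^ a) ^ 2"
        by (simp only: power_add power_mult mult.commute[of 2 a]) simp
      ultimately have "(n + 1) * 2 ^ n \<le> 1 * 2 ^ n"
        using a_fits unfolding N_def by linarith
      then show False
        using Suc \<open>a \<le> n\<close> by simp
    qed
    have "N * (2 ^ a) ^ 2 < N * N"
      using \<open>(2 ^ a) ^ 2 < N\<close> by simp
    also have "N * N = (n + 1) ^ 2 * (2 ^ n) ^ 2"
      unfolding N_def power2_eq_square by (simp only: mult_ac)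
    also have "\<dots> \<le> (2 * (a + 1)) ^ 2 * (2 ^ n) ^ 2"
      using \<open>n + 1 \<le> 2 * (a + 1)\<close> by (simp add: power_mono)
    also have "\<dots> = 4 * ((a + 1) * 2 ^ (n - a)) ^ 2 * (2 ^ a) ^ 2"
    proof -
      have split: "(2::nat) ^ n = 2 ^ (n - a) * 2 ^ a"
        using \<open>a \<le> n\<close> by (simp flip: power_add)
      show ?thesis
        unfolding split power_mult_distrib by (simp only: mult_ac) simp
    qed
    finally show ?thesis
      by simp
  qed
  with \<open>a \<le> n\<close> a_fits show ?thesis
    using that unfolding N_def by blast
qed

lemma exists_graph_many_cliques_and_cocliques:
  "\<exists>(V :: nat set) E. simple_graph V E \<and> card V = n
    \<and> real (num_cliques V E) \<ge> sqrt (real n + 1) * 2 powr (real n / 2) / 2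
    \<and> real (num_cocliques V E) \<ge> sqrt (real n + 1) * 2 powr (real n / 2) / 2"
proof -
  obtain a where "a \<le> n" "(n + 1) * 2 ^ n \<le> 4 * (2 ^ a) ^ 2"
    "(n + 1) * 2 ^ n \<le> 4 * ((a + 1) * 2 ^ (n - a)) ^ 2"
    by (rule exists_balanced_clique_size)
  then have "sqrt (real ((n + 1) * 2 ^ n)) / 2 \<le> real (num_cliques {..<n} (clique_edges a))"
    "sqrt (real ((n + 1) * 2 ^ n)) / 2 \<le> real (num_cocliques {..<n} (clique_edges a))"
    using num_cliques_clique_edges_ge[OF \<open>a \<le> n\<close>] num_cocliques_clique_edges_ge[OF \<open>a \<le> n\<close>]
    by (meson half_sqrt_le_of_le_square of_nat_le_iff order_trans)+
  then show ?thesis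
    using simple_graph_clique_edges[OF \<open>a \<le> n\<close>] unfolding sqrt_succ_mult_powr_half
    by (intro exI[of _ "{..<n}"] exI[of _ "clique_edges a"]) simp
qed

theorem theorem2:
  shows "(\<forall>(V :: 'a set) E. simple_graph V E \<longrightarrow>
            real (num_cliques V E) \<le> sqrt (real (card V) + 1) * 2 powr (real (card V) / 2)
          \<or> real (num_cocliques V E) \<le> sqrt (real (card V) + 1) * 2 powr (real (card V) / 2))
      \<and> (\<forall>n::nat. \<exists>(V :: nat set) E. simple_graph V E \<and> card V = n
          \<and> real (num_cliques V E) \<ge> sqrt (real n + 1) * 2 powr (real n / 2) / 2
          \<and> real (num_cocliques V E) \<ge> sqrt (real n + 1) * 2 powr (real n / 2) / 2)"
  using few_cliques_or_few_cocliques exists_graph_many_cliques_and_cocliques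
  by (auto simp: simple_graph_def)

end
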